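(* Let $(f,I,U)$ be a safety verification problem that is robustly safe with robustness margin $\mu>0$, with $\overline{I}\cap\overline{U}=\emptyset$ and $\mathbb{R}^n\setminus U$ bounded, and let $V$ be a $\mu$-robust safety certificate of $(f,I,U)$. Let $\partial\overline{V}$ denote the boundary of the closure of $V$. Then for every $x\in R^{\mathbb{R}}_f(\partial\overline{V})$ there is precisely one $t\in\mathbb{R}$ such that $\varphi_f(x,t)\in\partial\overline{V}$.
   Context: A safety verification problem is a triple $(f,I,U)$ with $f:\mathbb{R}^n\to\mathbb{R}^n$ smooth, $I,U\subseteq\mathbb{R}^n$. Convention: the flow $\varphi_f(x,t)$ of $\dot x=f(x)$ (the state reached at time $t\in\mathbb{R}$ from $x$; negative $t$ allowed, $\varphi_f(x,t)=y$ iff $\varphi_f(y,-t)=x$) is defined for all $x$, $t$. For $X\subseteq\mathbb{R}^n$, $R^{\mathbb{R}}_f(X)=\{\varphi_f(x,t)\mid x\in X,\ t\in\mathbb{R}\}$. For $\varepsilon\ge 0$, an $\varepsilon$-solution of $\dot x=f(x)$ is a differentiable function $x:\mathbb{R}^{\ge0}\to\mathbb{R}^n$ with $\|f(x(t))-\dot x(t)\|\le\varepsilon$ for all $t\ge0$. For $X\subseteq\mathbb{R}^n$, $T\subseteq\mathbb{R}^{\ge0}$: $R^{T}_{f,\varepsilon}(X)=\{x(t)\mid t\in T,\ x\text{ an }\varepsilon\text{-solution with }x(0)\in X\}$, $R_{f,\varepsilon}(X)=R^{\mathbb{R}^{\ge0}}_{f,\varepsilon}(X)$. Robustly safe with robustness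 margin $\mu>0$ means $R_{f,\mu}(I)\cap U=\emptyset$. A $\mu$-robust safety certificate is a set $V$ with $I\subseteq V$, $R_{f,\mu}(V)\subseteq V$, $V\cap U=\emptyset$. *)

theory Defs
  imports "HOL-Analysis.Analysis"
begin

text \<open>C-infinity (smooth) maps between fixed spaces: continuous, Frechet differentiable
  everywhere, and every directional derivative of the derivative is again smooth
  (greatest fixpoint).\<close>
coinductive smooth_map :: "('a::real_normed_vector \<Rightarrow> 'b::real_normed_vector) \<Rightarrow> bool" where
  "continuous_on UNIV g \<Longrightarrow> (\<forall>x. g differentiable (at x)) \<Longrightarrow>
   (\<forall>v. smooth_map (\<lambda>x. frechet_derivative g (at x) v)) \<Longrightarrow> smooth_map g"

definition is_flow :: "(real^'n \<Rightarrow> real^'n) \<Rightarrow> (real^'n \<Rightarrow> real \<Rightarrow> real^'n) \<Rightarrow> bool" where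
  "is_flow f phi \<longleftrightarrow> (\<forall>x. phi x 0 = x) \<and>
     (\<forall>x t. ((\<lambda>s. phi x s) has_vector_derivative f (phi x t)) (at t))"

definition flow_reach :: "(real^'n \<Rightarrow> real \<Rightarrow> real^'n) \<Rightarrow> (real^'n) set \<Rightarrow> (real^'n) set" where
  "flow_reach phi X = {phi x t | x t. x \<in> X}"

definition eps_solution :: "(real^'n \<Rightarrow> real^'n) \<Rightarrow> real \<Rightarrow> (real \<Rightarrow> real^'n) \<Rightarrow> bool" where
  "eps_solution f eps x \<longleftrightarrow> (\<exists>x'. \<forall>t\<ge>0. (x has_vector_derivative x' t) (at t within {0..})
      \<and> norm (f (x t) - x' t) \<le> eps)"

definition eps_reach :: "(real^'n \<Rightarrow> real^'n) \<Rightarrow> real \<Rightarrow> (real^'n) set \<Rightarrow> (real^'n) set" where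
  "eps_reach f eps X = {x t | x t. eps_solution f eps x \<and> x 0 \<in> X \<and> t \<ge> 0}"

definition robustly_safe :: "(real^'n \<Rightarrow> real^'n) \<Rightarrow> (real^'n) set \<Rightarrow> (real^'n) set \<Rightarrow> real \<Rightarrow> bool" where
  "robustly_safe f I U mu \<longleftrightarrow> mu > 0 \<and> eps_reach f mu I \<inter> U = {}"

definition robust_certificate :: "(real^'n \<Rightarrow> real^'n) \<Rightarrow> (real^'n) set \<Rightarrow> (real^'n) set \<Rightarrow> real \<Rightarrow> (real^'n) set \<Rightarrow> bool" where
  "robust_certificate f I U mu V \<longleftrightarrow> I \<subseteq> V \<and> eps_reach f mu V \<subseteq> V \<and> V \<inter> U = {}"

end

theory Submission
  imports Defs
begin

text \<open>
  Smoothness of \<open>f\<close> is used only through Lipschitz continuity on balls, which makes solutions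
  unique (so \<open>phi\<close> is a group action of \<open>\<real>\<close>) and, by Gronwall, continuous in the initial point.

  If \<open>x \<in> V\<close> and \<open>w\<close> is small, switching on the offset \<open>w\<close> smoothly along the trajectory,
  \<open>s \<mapsto> phi x s + (1 - exp (- s)) w\<close>, yields a \<open>mu\<close>-solution, which must stay in \<open>V\<close>.
  Hence for \<open>t > 0\<close> a ball of radius independent of \<open>x\<close> around \<open>phi x t\<close> lies in \<open>V\<close>, and by
  continuity of the flow \<open>phi y t\<close> is an interior point of \<open>V\<close> for every \<open>y\<close> in its closure.
  So a trajectory that touches the boundary of \<open>closure V\<close> lies in the interior afterwards
  and touches the boundary exactly once.
\<close>

lemma smooth_map_lipschitz_on_cball:
  fixes f :: "'a::euclidean_space \<Rightarrow> 'b::real_normed_vector"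
  assumes "smooth_map f"
  shows "\<exists>L. L-lipschitz_on (cball c R) f"
proof -
  define D where "D x = frechet_derivative f (at x)" for x
  have der: "(f has_derivative D x) (at x)" for x
    using assms frechet_derivative_works unfolding D_def by (blast elim: smooth_map.cases)
  have "continuous_on UNIV (\<lambda>x. D x v)" for v
    using assms unfolding D_def by (auto elim: smooth_map.cases)
  then have "continuous_on (cball c R) (\<lambda>x. \<Sum>b\<in>Basis. norm (D x b))"
    by (auto intro!: continuous_intros intro: continuous_on_subset)
  then obtain B where B: "\<And>x. x \<in> cball c R \<Longrightarrow> (\<Sum>b\<in>Basis. norm (D x b)) \<le> B"
    using bounded_imp_bdd_above[OF compact_imp_bounded[OF compact_continuous_image[OF _ compact_cball]]]
    unfolding bdd_above_def by fast
  have "norm (f x - f y) \<le> B * norm (x - y)" if "x \<in> cball c R" "y \<in> cball c R" for x y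
  proof (rule differentiable_bound[OF convex_cball _ _ that])
    show "(f has_derivative D z) (at z within cball c R)" for z
      using der has_derivative_at_withinI by blast
    show "onorm (D z) \<le> B" if "z \<in> cball c R" for z
      using onorm_componentwise[OF has_derivative_bounded_linear[OF der, of z]] B[OF that]
      by linarith
  qed
  then have "(max 0 B)-lipschitz_on (cball c R) f"
    by (intro lipschitz_onI)
      (auto simp: dist_norm intro: order_trans[OF _ mult_right_mono[OF max.cobounded2]])
  then show ?thesis ..
qed

lemma has_vector_derivative_affine_time:
  fixes u :: "real \<Rightarrow> 'a::real_normed_vector"
  assumes "(u has_vector_derivative u') (at (a + c * s))"
  shows "((\<lambda>s. u (a + c * s)) has_vector_derivative c *\<^sub>R u') (at s)"
proof -
  have "((\<lambda>s. a + c * s) has_vector_derivative c) (at s)"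
    by (auto intro!: derivative_eq_intros simp: has_real_derivative_iff_has_vector_derivative[symmetric])
  from vector_diff_chain_at[OF this assms] show ?thesis by (simp add: o_def)
qed

lemma ode_solutions_dist_le_exp:
  fixes u w :: "real \<Rightarrow> 'a::real_inner"
  assumes u: "\<And>r. (u has_vector_derivative g (u r)) (at r)"
    and w: "\<And>r. (w has_vector_derivative g (w r)) (at r)"
    and lip: "L-lipschitz_on K g"
    and in_K: "\<And>r. r \<in> {0..s} \<Longrightarrow> u r \<in> K \<and> w r \<in> K"
    and "0 \<le> s"
  shows "norm (u s - w s) \<le> exp (L * s) * norm (u 0 - w 0)"
proof -
  define d where "d r = u r - w r" for r
  define d' where "d' r = g (u r) - g (w r)" for r
  \<comment> \<open>\<open>(d \<bullet> d)' = 2 d \<bullet> d' \<le> 2 L (d \<bullet> d)\<close>, so the weight makes \<open>h\<close> nonincreasing.\<close>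
  define h where "h r = exp (-2 * L * r) * (d r \<bullet> d r)" for r
  have d': "(d has_derivative (\<lambda>x. x *\<^sub>R d' r)) (at r)" for r
    using u w unfolding d_def d'_def has_vector_derivative_def[symmetric]
    by (intro derivative_intros)
  have "((\<lambda>r. d r \<bullet> d r) has_real_derivative 2 * (d r \<bullet> d' r)) (at r)" for r
    unfolding has_field_derivative_def
    by (rule has_derivative_eq_rhs[OF has_derivative_inner[OF d' d']])
      (auto simp: inner_commute algebra_simps)
  then have h': "(h has_real_derivative exp (-2 * L * r) * (2 * (d r \<bullet> d' r) - 2 * L * (d r \<bullet> d r))) (at r)"
    for r
    unfolding h_def by (auto intro!: derivative_eq_intros simp: algebra_simps)
  have inner_le: "d r \<bullet> d' r \<le> L * (d r \<bullet> d r)" if "r \<in> {0..s}" for r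
  proof -
    have "d r \<bullet> d' r \<le> norm (d r) * norm (d' r)"
      by (rule norm_cauchy_schwarz)
    also have "\<dots> \<le> norm (d r) * (L * norm (d r))"
      using lipschitz_on_normD[OF lip] in_K[OF that] unfolding d_def d'_def
      by (intro mult_left_mono) auto
    finally show ?thesis
      by (simp add: power2_norm_eq_inner[symmetric] power2_eq_square mult.left_commute)
  qed
  have "h s \<le> h 0"
  proof (rule DERIV_nonpos_imp_nonincreasing[OF \<open>0 \<le> s\<close>])
    fix r assume "0 \<le> r" "r \<le> s"
    with inner_le[of r]
    have "exp (-2 * L * r) * (2 * (d r \<bullet> d' r) - 2 * L * (d r \<bullet> d r)) \<le> 0"
      by (intro mult_nonneg_nonpos) auto
    with h' show "\<exists>y. (h has_real_derivative y) (at r) \<and> y \<le> 0"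
      by blast
  qed
  then have decay: "exp (-2 * L * s) * (norm (d s))\<^sup>2 \<le> (norm (d 0))\<^sup>2"
    by (simp add: h_def power2_norm_eq_inner)
  have "(norm (d s))\<^sup>2 = exp (2 * L * s) * (exp (-2 * L * s) * (norm (d s))\<^sup>2)"
    by (simp add: mult.assoc[symmetric] flip: exp_add)
  also have "\<dots> \<le> exp (2 * L * s) * (norm (d 0))\<^sup>2"
    using decay by (rule mult_left_mono) simp
  also have "\<dots> = (exp (L * s) * norm (d 0))\<^sup>2"
    by (simp add: power_mult_distrib mult.assoc flip: exp_double)
  finally have "(norm (d s))\<^sup>2 \<le> (exp (L * s) * norm (d 0))\<^sup>2" .
  then show ?thesis
    unfolding d_def by (rule power2_le_imp_le) simp
qed

lemma ode_solutions_unique_forward: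
  fixes u w :: "real \<Rightarrow> 'a::real_inner"
  assumes lip: "\<And>R. \<exists>L. L-lipschitz_on (cball 0 R) g"
    and u: "\<And>r. (u has_vector_derivative g (u r)) (at r)"
    and w: "\<And>r. (w has_vector_derivative g (w r)) (at r)"
    and "u 0 = w 0" and "0 \<le> s"
  shows "u s = w s"
proof -
  have "continuous_on {0..s} u" "continuous_on {0..s} w"
    using u w by (meson continuous_on_vector_derivative has_vector_derivative_at_within)+
  then have "bounded (u ` {0..s} \<union> w ` {0..s})"
    by (simp add: compact_imp_bounded compact_continuous_image)
  then obtain R where R: "\<forall>x \<in> u ` {0..s} \<union> w ` {0..s}. norm x \<le> R"
    unfolding bounded_iff by blast
  obtain L where L: "L-lipschitz_on (cball 0 R) g"
    using lip by blast
  have "norm (u s - w s) \<le> exp (L * s) * norm (u 0 - w 0)"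
    using R by (intro ode_solutions_dist_le_exp[OF u w L _ \<open>0 \<le> s\<close>]) auto
  with \<open>u 0 = w 0\<close> show ?thesis
    by simp
qed

lemma ode_solutions_unique:
  fixes u w :: "real \<Rightarrow> 'a::real_inner"
  assumes lip: "\<And>R. \<exists>L. L-lipschitz_on (cball 0 R) g"
    and u: "\<And>r. (u has_vector_derivative g (u r)) (at r)"
    and w: "\<And>r. (w has_vector_derivative g (w r)) (at r)"
    and "u 0 = w 0"
  shows "u s = w s"
proof (cases "0 \<le> s")
  case True
  with ode_solutions_unique_forward[OF lip u w \<open>u 0 = w 0\<close>] show ?thesis .
next
  case False
  have reversed: "((\<lambda>r. v (- r)) has_vector_derivative - g (v (- r))) (at r)"
    if "\<And>r. (v has_vector_derivative g (v r)) (at r)" for v :: "real \<Rightarrow> 'a" and r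
    using has_vector_derivative_affine_time[of v _ 0 "-1" r] that by simp
  have "\<exists>L. L-lipschitz_on (cball 0 R) (\<lambda>x. - g x)" for R
    using lip by simp
  from ode_solutions_unique_forward[OF this reversed[OF u] reversed[OF w], of "- s"] \<open>u 0 = w 0\<close> False
  show ?thesis
    by simp
qed

lemma first_hitting_time:
  fixes g :: "real \<Rightarrow> real"
  assumes "continuous_on {a..b} g" and "g a < c" and "c \<le> g b" and "a \<le> b"
  shows "\<exists>\<tau>\<in>{a..b}. g \<tau> = c \<and> (\<forall>r\<in>{a..\<tau>}. g r \<le> c)"
proof -
  define Z where "Z = {a..b} \<inter> g -` {c..}"
  have "closed Z"
    unfolding Z_def using assms(1) by (intro continuous_closed_preimage) auto
  moreover have "b \<in> Z" "bdd_below Z"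
    using assms unfolding Z_def by (auto intro: bdd_belowI[of _ a])
  ultimately have "Inf Z \<in> Z"
    by (intro closed_contains_Inf) auto
  then have \<tau>: "Inf Z \<in> {a..b}" "c \<le> g (Inf Z)"
    unfolding Z_def by auto
  have below: "g r < c" if "r \<in> {a..<Inf Z}" for r
    using that \<tau> cInf_lower[OF _ \<open>bdd_below Z\<close>, of r] unfolding Z_def by fastforce
  have "continuous_on {a..Inf Z} g"
    using continuous_on_subset[OF assms(1)] \<tau> by auto
  then obtain x where x: "x \<in> {a..Inf Z}" "g x = c"
    using IVT'[of g a c "Inf Z"] assms(2) \<tau> by auto
  with below have "x = Inf Z"
    by fastforce
  with x \<tau> below show ?thesis
    by (intro bexI[of _ "Inf Z"]) (auto simp: le_less)
qed

lemma flow_zero: "is_flow f phi \<Longrightarrow> phi x 0 = x"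
  unfolding is_flow_def by blast

lemma flow_has_vector_derivative:
  "is_flow f phi \<Longrightarrow> (phi x has_vector_derivative f (phi x t)) (at t)"
  unfolding is_flow_def by blast

lemma flow_continuous_on_time: "is_flow f phi \<Longrightarrow> continuous_on A (phi x)"
  by (meson continuous_on_vector_derivative flow_has_vector_derivative has_vector_derivative_at_within)

lemma flow_add:
  assumes lip: "\<And>R. \<exists>L. L-lipschitz_on (cball 0 R) f" and fl: "is_flow f phi"
  shows "phi (phi x s) t = phi x (s + t)"
proof -
  have "((\<lambda>t. phi x (s + 1 * t)) has_vector_derivative f (phi x (s + 1 * t))) (at t)" for t
    using has_vector_derivative_affine_time[of "phi x" _ s 1 t] flow_has_vector_derivative[OF fl]
    by simp
  from ode_solutions_unique[OF lip flow_has_vector_derivative[OF fl] this] show ?thesis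
    by (simp add: flow_zero[OF fl])
qed

lemma flow_continuous_initial:
  assumes lip: "\<And>R. \<exists>L. L-lipschitz_on (cball 0 R) f" and fl: "is_flow f phi" and "0 \<le> t"
  shows "continuous (at y) (\<lambda>x. phi x t)"
proof -
  have "bounded (phi y ` {0..t})"
    using flow_continuous_on_time[OF fl] by (simp add: compact_imp_bounded compact_continuous_image)
  then obtain R where R: "\<forall>r\<in>{0..t}. norm (phi y r) \<le> R"
    unfolding bounded_iff by blast
  obtain L where L: "L-lipschitz_on (cball 0 (R + 1)) f"
    using lip by blast
  have exp_ge: "1 \<le> exp (L * t)"
    using lipschitz_on_nonneg[OF L] \<open>0 \<le> t\<close> by simp
  have near: "dist (phi x s) (phi y s) \<le> exp (L * t) * dist x y"
    if s: "s \<in> {0..t}" and close: "\<forall>r\<in>{0..s}. dist (phi x r) (phi y r) \<le> 1" for x s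
  proof -
    have "phi x r \<in> cball 0 (R + 1) \<and> phi y r \<in> cball 0 (R + 1)" if "r \<in> {0..s}" for r
    proof -
      have "norm (phi y r) \<le> R" "dist (phi x r) (phi y r) \<le> 1"
        using R close that s by auto
      then show ?thesis
        using norm_triangle_ineq2[of "phi x r" "phi y r"] by (simp add: dist_norm)
    qed
    from ode_solutions_dist_le_exp[OF flow_has_vector_derivative[OF fl]
        flow_has_vector_derivative[OF fl] L this]
    have "dist (phi x s) (phi y s) \<le> exp (L * s) * dist x y"
      using s by (simp add: dist_norm flow_zero[OF fl])
    also have "\<dots> \<le> exp (L * t) * dist x y"
      using s lipschitz_on_nonneg[OF L] by (intro mult_right_mono) (auto intro: mult_left_mono)
    finally show ?thesis .
  qed
  \<comment> \<open>A trajectory starting close to \<open>y\<close> cannot leave the ball where \<open>L\<close> is valid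
    before time \<open>t\<close>.\<close>
  have stays: "\<forall>s\<in>{0..t}. dist (phi x s) (phi y s) \<le> 1" if small: "exp (L * t) * dist x y < 1" for x
  proof (rule ccontr)
    assume "\<not> ?thesis"
    then obtain s where s: "s \<in> {0..t}" "1 < dist (phi x s) (phi y s)"
      by auto
    have "dist x y \<le> exp (L * t) * dist x y"
      using exp_ge by (simp add: mult_le_cancel_right1)
    with small have "dist (phi x 0) (phi y 0) < 1"
      by (simp add: flow_zero[OF fl])
    moreover have "continuous_on {0..s} (\<lambda>r. dist (phi x r) (phi y r))"
      using flow_continuous_on_time[OF fl] by (intro continuous_intros)
    ultimately obtain \<tau> where "\<tau> \<in> {0..s}" "dist (phi x \<tau>) (phi y \<tau>) = 1"
      "\<forall>r\<in>{0..\<tau>}. dist (phi x r) (phi y r) \<le> 1"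
      using first_hitting_time[of 0 s _ 1] s by fastforce
    with near[of \<tau> x] s small show False
      by auto
  qed
  show ?thesis
    unfolding continuous_at_eps_delta
  proof (intro allI impI)
    fix \<epsilon> :: real assume "0 < \<epsilon>"
    show "\<exists>\<delta>>0. \<forall>x. dist x y < \<delta> \<longrightarrow> dist (phi x t) (phi y t) < \<epsilon>"
    proof (intro exI[of _ "min \<epsilon> 1 / exp (L * t)"] conjI allI impI)
      fix x assume "dist x y < min \<epsilon> 1 / exp (L * t)"
      then have "exp (L * t) * dist x y < min \<epsilon> 1"
        by (simp add: field_simps)
      with near[of t x] stays[of x] \<open>0 \<le> t\<close> show "dist (phi x t) (phi y t) < \<epsilon>"
        by auto
    qed (use \<open>0 < \<epsilon>\<close> in simp)
  qed
qed

lemma eps_solutionI: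
  assumes "\<And>t. 0 \<le> t \<Longrightarrow> (x has_vector_derivative x' t) (at t)"
    and "\<And>t. 0 \<le> t \<Longrightarrow> norm (f (x t) - x' t) \<le> eps"
  shows "eps_solution f eps x"
  unfolding eps_solution_def using assms has_vector_derivative_at_within by blast

lemma eps_reachI: "eps_solution f eps x \<Longrightarrow> x 0 \<in> X \<Longrightarrow> 0 \<le> t \<Longrightarrow> x t \<in> eps_reach f eps X"
  unfolding eps_reach_def by blast

lemma flow_eps_solution: "is_flow f phi \<Longrightarrow> 0 \<le> eps \<Longrightarrow> eps_solution f eps (phi x)"
  by (rule eps_solutionI[OF flow_has_vector_derivative[of f phi x]]) simp_all

lemma flow_mem_eps_invariant:
  assumes "is_flow f phi" and "0 \<le> eps" and "eps_reach f eps V \<subseteq> V" and "x \<in> V" and "0 \<le> t"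
  shows "phi x t \<in> V"
  using eps_reachI[OF flow_eps_solution[OF assms(1,2)], of x V t] flow_zero[OF assms(1)] assms(3-)
  by auto

lemma eps_solution_add_scaled_offset:
  fixes f :: "real^'n \<Rightarrow> real^'n"
  assumes u: "\<And>s. (u has_vector_derivative f (u s)) (at s)"
    and L: "L-lipschitz_on (cball 0 (R + 1)) f"
    and bound: "\<And>s. 0 \<le> s \<Longrightarrow> norm (u s) \<le> R"
    and "norm w \<le> 1" and "(L + 1) * norm w \<le> eps"
  shows "eps_solution f eps (\<lambda>s. u s + (1 - exp (- s)) *\<^sub>R w)"
proof (rule eps_solutionI)
  fix s :: real assume "0 \<le> s"
  show "((\<lambda>s. u s + (1 - exp (- s)) *\<^sub>R w) has_vector_derivative f (u s) + exp (- s) *\<^sub>R w) (at s)"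
    by (auto intro!: derivative_eq_intros u)
  let ?v = "(1 - exp (- s)) *\<^sub>R w"
  have "exp (- s) \<le> 1"
    using \<open>0 \<le> s\<close> by simp
  then have "norm ?v \<le> norm w"
    by (simp add: mult_left_le_one_le)
  then have "u s \<in> cball 0 (R + 1)" "u s + ?v \<in> cball 0 (R + 1)"
    using bound[OF \<open>0 \<le> s\<close>] \<open>norm w \<le> 1\<close> norm_triangle_ineq[of "u s" ?v] by auto
  then have "norm (f (u s + ?v) - f (u s)) \<le> L * norm (u s + ?v - u s)"
    by (rule lipschitz_on_normD[OF L, rotated])
  also have "\<dots> \<le> L * norm w"
    using \<open>norm ?v \<le> norm w\<close> lipschitz_on_nonneg[OF L] by (simp add: mult_left_mono)
  finally have "norm (f (u s + ?v) - f (u s)) \<le> L * norm w" .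
  moreover have "norm (exp (- s) *\<^sub>R w) \<le> norm w"
    using \<open>exp (- s) \<le> 1\<close> by (simp add: mult_left_le_one_le)
  ultimately have "norm (f (u s + ?v) - (f (u s) + exp (- s) *\<^sub>R w)) \<le> (L + 1) * norm w"
    using norm_triangle_ineq4[of "f (u s + ?v) - f (u s)" "exp (- s) *\<^sub>R w"]
    by (simp add: algebra_simps)
  with \<open>(L + 1) * norm w \<le> eps\<close>
  show "norm (f (u s + ?v) - (f (u s) + exp (- s) *\<^sub>R w)) \<le> eps"
    by linarith
qed

lemma eps_invariant_flow_uniform_ball:
  fixes f :: "real^'n \<Rightarrow> real^'n"
  assumes lip: "\<And>R. \<exists>L. L-lipschitz_on (cball 0 R) f" and fl: "is_flow f phi"
    and inv: "eps_reach f eps V \<subseteq> V" and "0 < eps" and "bounded V" and "0 < t"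
  shows "\<exists>r>0. \<forall>x\<in>V. ball (phi x t) r \<subseteq> V"
proof -
  obtain R where R: "\<forall>x\<in>V. norm x \<le> R"
    using \<open>bounded V\<close> unfolding bounded_iff by blast
  obtain L where L: "L-lipschitz_on (cball 0 (R + 1)) f"
    using lip by blast
  define c where "c = 1 - exp (- t)"
  define \<rho> where "\<rho> = min 1 (eps / (L + 1))"
  have "0 < c"
    using \<open>0 < t\<close> unfolding c_def by simp
  have "0 < \<rho>"
    using \<open>0 < eps\<close> lipschitz_on_nonneg[OF L] unfolding \<rho>_def by simp
  show ?thesis
  proof (intro exI[of _ "c * \<rho>"] conjI ballI subsetI)
    show "0 < c * \<rho>"
      using \<open>0 < c\<close> \<open>0 < \<rho>\<close> by simp
    fix x p assume "x \<in> V" and p: "p \<in> ball (phi x t) (c * \<rho>)"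
    define w where "w = (1 / c) *\<^sub>R (p - phi x t)"
    have "p = phi x t + c *\<^sub>R w"
      using \<open>0 < c\<close> unfolding w_def by simp
    have "norm w = dist (phi x t) p / c"
      using \<open>0 < c\<close> unfolding w_def norm_scaleR by (simp add: dist_norm norm_minus_commute)
    also have "\<dots> < \<rho>"
      using p \<open>0 < c\<close> by (simp add: pos_divide_less_eq mult.commute)
    finally have "norm w < \<rho>" .
    then have "norm w \<le> 1" "(L + 1) * norm w \<le> eps"
      using lipschitz_on_nonneg[OF L] unfolding \<rho>_def by (auto simp: field_simps)
    moreover have "norm (phi x s) \<le> R" if "0 \<le> s" for s
      using R flow_mem_eps_invariant[OF fl _ inv \<open>x \<in> V\<close> that] \<open>0 < eps\<close> by simp
    ultimately have "eps_solution f eps (\<lambda>s. phi x s + (1 - exp (- s)) *\<^sub>R w)"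
      by (intro eps_solution_add_scaled_offset[OF flow_has_vector_derivative[OF fl] L])
    from eps_reachI[OF this _ less_imp_le[OF \<open>0 < t\<close>], of V] \<open>x \<in> V\<close>
    have "phi x t + c *\<^sub>R w \<in> eps_reach f eps V"
      by (simp add: flow_zero[OF fl] c_def)
    with inv \<open>p = phi x t + c *\<^sub>R w\<close> show "p \<in> V"
      by blast
  qed
qed

lemma eps_invariant_flow_closure_into_interior:
  fixes f :: "real^'n \<Rightarrow> real^'n"
  assumes lip: "\<And>R. \<exists>L. L-lipschitz_on (cball 0 R) f" and fl: "is_flow f phi"
    and inv: "eps_reach f eps V \<subseteq> V" and "0 < eps" and "bounded V"
    and "y \<in> closure V" and "0 < t"
  shows "phi y t \<in> interior V"
proof -
  obtain r where "0 < r" and r: "\<forall>x\<in>V. ball (phi x t) r \<subseteq> V"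
    using eps_invariant_flow_uniform_ball[OF lip fl inv \<open>0 < eps\<close> \<open>bounded V\<close> \<open>0 < t\<close>] by blast
  obtain \<delta> where "0 < \<delta>" and \<delta>: "\<forall>x. dist x y < \<delta> \<longrightarrow> dist (phi x t) (phi y t) < r / 2"
    using flow_continuous_initial[OF lip fl less_imp_le[OF \<open>0 < t\<close>], of y] \<open>0 < r\<close>
    unfolding continuous_at_eps_delta by (meson half_gt_zero)
  obtain x where "x \<in> V" "dist x y < \<delta>"
    using \<open>y \<in> closure V\<close> \<open>0 < \<delta>\<close> unfolding closure_approachable by blast
  with \<delta> have "ball (phi y t) (r / 2) \<subseteq> ball (phi x t) r"
    by (auto simp: ball_subset_ball_iff dist_commute)
  with r \<open>x \<in> V\<close> \<open>0 < r\<close> show ?thesis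
    by (meson half_gt_zero mem_interior order_trans)
qed

lemma flow_reach_frontier_unique_time:
  assumes add: "\<And>x s t. phi (phi x s) t = phi x (s + t)" and zero: "\<And>x. phi x 0 = x"
    and "closed A" and into: "\<And>y t. y \<in> A \<Longrightarrow> 0 < t \<Longrightarrow> phi y t \<in> interior A"
    and "x \<in> flow_reach phi (frontier A)"
  shows "\<exists>!t. phi x t \<in> frontier A"
proof -
  obtain y t\<^sub>0 where x: "x = phi y t\<^sub>0" and "y \<in> frontier A"
    using \<open>x \<in> flow_reach phi (frontier A)\<close> unfolding flow_reach_def by blast
  then have hit: "phi x (- t\<^sub>0) \<in> frontier A"
    by (simp add: add zero)
  have no_return: "False"
    if "t\<^sub>1 < t\<^sub>2" "phi x t\<^sub>1 \<in> frontier A" "phi x t\<^sub>2 \<in> frontier A" for t\<^sub>1 t\<^sub>2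
  proof -
    have "phi x t\<^sub>1 \<in> A"
      using that(2) frontier_subset_closed[OF \<open>closed A\<close>] by blast
    then have "phi (phi x t\<^sub>1) (t\<^sub>2 - t\<^sub>1) \<in> interior A"
      using into that(1) by simp
    with that(3) show False
      by (simp add: add frontier_def)
  qed
  show ?thesis
    using hit no_return by (metis linorder_neqE_linordered_idom)
qed

theorem lemma2:
  fixes f :: "real^'n \<Rightarrow> real^'n" and phi :: "real^'n \<Rightarrow> real \<Rightarrow> real^'n"
    and I U V :: "(real^'n) set" and mu :: real
  assumes "smooth_map f"
    and "is_flow f phi"
    and "robustly_safe f I U mu"
    and "closure I \<inter> closure U = {}"
    and "bounded (UNIV - U)"
    and "robust_certificate f I U mu V"
  shows "\<forall>x \<in> flow_reach phi (frontier (closure V)). \<exists>!t. phi x t \<in> frontier (closure V)"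
proof
  fix x assume x: "x \<in> flow_reach phi (frontier (closure V))"
  note fl = \<open>is_flow f phi\<close>
  have lip: "\<And>R. \<exists>L. L-lipschitz_on (cball 0 R) f"
    using smooth_map_lipschitz_on_cball[OF \<open>smooth_map f\<close>] by blast
  have "0 < mu"
    using \<open>robustly_safe f I U mu\<close> unfolding robustly_safe_def by blast
  have inv: "eps_reach f mu V \<subseteq> V" and "V \<subseteq> UNIV - U"
    using \<open>robust_certificate f I U mu V\<close> unfolding robust_certificate_def by blast+
  then have "bounded V"
    using \<open>bounded (UNIV - U)\<close> bounded_subset by blast
  show "\<exists>!t. phi x t \<in> frontier (closure V)"
  proof (rule flow_reach_frontier_unique_time[OF flow_add[OF lip fl] flow_zero[OF fl] closed_closure _ x])
    fix y and t :: real
    assume "y \<in> closure V" "0 < t"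
    with eps_invariant_flow_closure_into_interior[OF lip fl inv \<open>0 < mu\<close> \<open>bounded V\<close>]
    have "phi y t \<in> interior V"
      by blast
    then show "phi y t \<in> interior (closure V)"
      using interior_mono[OF closure_subset] by blast
  qed
qed

end
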